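(* Under a non-stretching curve evolution $\gamma_t=r_0\gamma+r_1\gamma'+r_2\gamma''$ with $r_0=-r_1'-\tfrac13(r_2''+2p_1r_2)$, the invariants $k_1=p_1$, $k_2=p_0-p_1'$ evolve by \[ \begin{pmatrix}k_1\\ k_2\end{pmatrix}_t=\mathcal{P}\begin{pmatrix}r_1\\ r_2\end{pmatrix}, \] where $\mathcal{P}$ is the skew-adjoint matrix differential operator \[ \mathcal{P}=\begin{pmatrix}-2D^3+Dk_1+k_1D & -D^4+D^2k_1+2Dk_2+k_2D\\[2pt] D^4-k_1D^2+2k_2D+Dk_2 & \tfrac23\big(D^5+k_1Dk_1-k_1D^3-D^3k_1\big)+[k_2,D^2]\end{pmatrix}. \]
   Context: Let $\gamma(x,t)$ be a family of nondegenerate (starlike) curves in centroaffine $\mathbb R^3$, each parametrized by centroaffine arclength $x$, i.e. $\det(\gamma,\gamma',\gamma'')=1$, where primes denote $x$-derivatives. Then $\gamma'''=p_0\gamma+p_1\gamma'$ for the Wilczynski invariants $p_0,p_1$. Set $k_1=p_1$, $k_2=p_0-p_1'$. $D$ denotes $\partial/\partial x$, products such as $Dk_1$ mean composition of $D$ with multiplication by $k_1$, and $[\cdot,\cdot]$ is the commutator of operators. *)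

theory Defs
  imports "HOL-Analysis.Analysis"
begin

text \<open>Functions of two real variables (x,t). Partial derivative in x (the
centroaffine arclength parameter) and in t (the evolution parameter).\<close>

definition pDx :: "(real \<Rightarrow> real \<Rightarrow> 'a::real_normed_vector) \<Rightarrow> real \<Rightarrow> real \<Rightarrow> 'a" where
  "pDx f = (\<lambda>x t. vector_derivative (\<lambda>y. f y t) (at x))"

definition pDt :: "(real \<Rightarrow> real \<Rightarrow> 'a::real_normed_vector) \<Rightarrow> real \<Rightarrow> real \<Rightarrow> 'a" where
  "pDt f = (\<lambda>x t. vector_derivative (\<lambda>s. f x s) (at t))"

fun iter_partial :: "bool list \<Rightarrow> (real \<Rightarrow> real \<Rightarrow> 'a::real_normed_vector) \<Rightarrow> real \<Rightarrow> real \<Rightarrow> 'a" where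
  "iter_partial [] f = f"
| "iter_partial (b # bs) f = (if b then pDx else pDt) (iter_partial bs f)"

definition smooth2 :: "(real \<times> real) set \<Rightarrow> (real \<Rightarrow> real \<Rightarrow> 'a::real_normed_vector) \<Rightarrow> bool" where
  "smooth2 U f \<longleftrightarrow>
     (\<forall>bs. continuous_on U (\<lambda>z. iter_partial bs f (fst z) (snd z)) \<and>
           (\<forall>x t. (x, t) \<in> U \<longrightarrow>
                 (\<lambda>y. iter_partial bs f y t) differentiable (at x) \<and>
                 (\<lambda>s. iter_partial bs f x s) differentiable (at t)))"

end

theory Submission
  imports Defs
begin

text \<open>The time derivatives of \<gamma>, \<gamma>', \<gamma>'', \<gamma>''' are computed in the moving frame
  (\<gamma>, \<gamma>', \<gamma>''): the evolution equation gives the first, and each further one follows by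
  commuting \<partial>t with \<partial>x and reducing \<gamma>''' = p0 \<gamma> + p1 \<gamma>'. Differentiating this Wilczynski
  relation in t and comparing coefficients, which are unique because det(\<gamma>, \<gamma>', \<gamma>'') = 1,
  expresses (p0)_t and (p1)_t as differential polynomials in p0, p1, r1, r2; expanding
  k2 = p0 - p1' then gives the two rows of the operator. Analytically one needs only the
  symmetry of mixed partials and the smoothness of p0, p1, r1, r2, which are determinants
  of smooth vectors by Cramer's rule.\<close>

definition agree_on :: "(real \<times> real) set \<Rightarrow> (real \<Rightarrow> real \<Rightarrow> 'a) \<Rightarrow> (real \<Rightarrow> real \<Rightarrow> 'a) \<Rightarrow> bool"
  where "agree_on U f g \<longleftrightarrow> (\<forall>x t. (x, t) \<in> U \<longrightarrow> f x t = g x t)"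

lemma agree_on_refl: "agree_on U f f"
  by (simp add: agree_on_def)

lemma agree_on_sym: "agree_on U f g \<Longrightarrow> agree_on U g f"
  by (simp add: agree_on_def)

lemma agree_on_trans: "agree_on U f g \<Longrightarrow> agree_on U g h \<Longrightarrow> agree_on U f h"
  by (simp add: agree_on_def)

lemma open_slice_x: "open U \<Longrightarrow> open {y. (y, t) \<in> U}"
  using open_vimage[of U "\<lambda>y. (y, t)"] by (simp add: vimage_def continuous_intros)

lemma open_slice_t: "open U \<Longrightarrow> open {s. (x, s) \<in> U}"
  using open_vimage[of U "\<lambda>s. (x, s)"] by (simp add: vimage_def continuous_intros)

lemma vector_derivative_cong_open:
  assumes "open S" "x \<in> S" "\<And>y. y \<in> S \<Longrightarrow> f y = g y"
  shows "vector_derivative f (at x) = vector_derivative g (at x)"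
  using assms by (intro vector_derivative_cong_eq eventually_mono[OF eventually_nhds_in_open]) auto

lemma differentiable_cong_open:
  fixes f g :: "real \<Rightarrow> 'a::real_normed_vector"
  assumes "open S" "x \<in> S" "\<And>y. y \<in> S \<Longrightarrow> f y = g y"
  shows "f differentiable (at x) \<longleftrightarrow> g differentiable (at x)"
  using assms has_vector_derivative_transform_within_open[OF _ assms(1,2)]
  by (metis differentiableI_vector vector_derivative_works)

lemma pDx_agree:
  assumes "open U" "agree_on U f g" "(x, t) \<in> U"
  shows "pDx f x t = pDx g x t"
  unfolding pDx_def using assms
  by (intro vector_derivative_cong_open[OF open_slice_x]) (auto simp: agree_on_def)

lemma pDt_agree:
  assumes "open U" "agree_on U f g" "(x, t) \<in> U"
  shows "pDt f x t = pDt g x t"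
  unfolding pDt_def using assms
  by (intro vector_derivative_cong_open[OF open_slice_t]) (auto simp: agree_on_def)

lemma agree_on_pDx: "open U \<Longrightarrow> agree_on U f g \<Longrightarrow> agree_on U (pDx f) (pDx g)"
  using pDx_agree unfolding agree_on_def[of U "pDx f"] by blast

lemma agree_on_pDt: "open U \<Longrightarrow> agree_on U f g \<Longrightarrow> agree_on U (pDt f) (pDt g)"
  using pDt_agree unfolding agree_on_def[of U "pDt f"] by blast

lemma agree_on_iter_partial:
  "open U \<Longrightarrow> agree_on U f g \<Longrightarrow> agree_on U (iter_partial bs f) (iter_partial bs g)"
  by (induction bs) (auto intro: agree_on_pDx agree_on_pDt)

definition regular_on :: "(real \<times> real) set \<Rightarrow> (real \<Rightarrow> real \<Rightarrow> 'a::real_normed_vector) \<Rightarrow> bool"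
  where "regular_on U f \<longleftrightarrow> continuous_on U (\<lambda>z. f (fst z) (snd z)) \<and>
    (\<forall>x t. (x, t) \<in> U \<longrightarrow> (\<lambda>y. f y t) differentiable (at x) \<and> (\<lambda>s. f x s) differentiable (at t))"

lemma smooth2_iff_regular_on: "smooth2 U f \<longleftrightarrow> (\<forall>bs. regular_on U (iter_partial bs f))"
  unfolding smooth2_def regular_on_def by blast

lemma regular_on_agree:
  assumes "open U" "agree_on U f g" "regular_on U f"
  shows "regular_on U g"
  unfolding regular_on_def
proof (intro conjI allI impI)
  show "continuous_on U (\<lambda>z. g (fst z) (snd z))"
    using assms(2,3) by (auto simp: regular_on_def agree_on_def intro: continuous_on_eq)
  fix x t assume xt: "(x, t) \<in> U"
  show "(\<lambda>y. g y t) differentiable (at x)"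
    using assms(2,3) xt by (subst differentiable_cong_open[OF open_slice_x[OF assms(1)], where g="\<lambda>y. f y t"])
      (auto simp: regular_on_def agree_on_def)
  show "(\<lambda>s. g x s) differentiable (at t)"
    using assms(2,3) xt by (subst differentiable_cong_open[OF open_slice_t[OF assms(1)], where g="\<lambda>s. f x s"])
      (auto simp: regular_on_def agree_on_def)
qed

lemma smooth2_agree: "open U \<Longrightarrow> agree_on U f g \<Longrightarrow> smooth2 U f \<Longrightarrow> smooth2 U g"
  unfolding smooth2_iff_regular_on by (metis agree_on_iter_partial regular_on_agree)

lemma iter_partial_append: "iter_partial bs (iter_partial cs f) = iter_partial (bs @ cs) f"
  by (induction bs) auto

lemma smooth2_iter_partial: "smooth2 U f \<Longrightarrow> smooth2 U (iter_partial cs f)"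
  unfolding smooth2_iff_regular_on iter_partial_append by blast

lemma smooth2_pDx: "smooth2 U f \<Longrightarrow> smooth2 U (pDx f)"
  using smooth2_iter_partial[of U f "[True]"] by simp

lemma smooth2_pDt: "smooth2 U f \<Longrightarrow> smooth2 U (pDt f)"
  using smooth2_iter_partial[of U f "[False]"] by simp

lemma smooth2_funpow_pDx: "smooth2 U f \<Longrightarrow> smooth2 U ((pDx ^^ n) f)"
  by (induction n) (auto intro: smooth2_pDx)

lemma smooth2_regular_on: "smooth2 U f \<Longrightarrow> regular_on U f"
  unfolding smooth2_iff_regular_on by (metis iter_partial.simps(1))

lemma smooth2_const: "smooth2 U (\<lambda>x t. c)"
proof -
  have "iter_partial bs (\<lambda>x t. c) = (\<lambda>x t. if bs = [] then c else 0)" for bs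
    by (induction bs) (auto simp: pDx_def pDt_def)
  then show ?thesis
    by (simp add: smooth2_iff_regular_on regular_on_def)
qed

lemma smooth2_has_vector_derivative_x:
  "smooth2 U f \<Longrightarrow> (x, t) \<in> U \<Longrightarrow> ((\<lambda>y. f y t) has_vector_derivative pDx f x t) (at x)"
  unfolding pDx_def by (auto simp: vector_derivative_works[symmetric] regular_on_def dest: smooth2_regular_on)

lemma smooth2_has_vector_derivative_t:
  "smooth2 U f \<Longrightarrow> (x, t) \<in> U \<Longrightarrow> ((\<lambda>s. f x s) has_vector_derivative pDt f x t) (at t)"
  unfolding pDt_def by (auto simp: vector_derivative_works[symmetric] regular_on_def dest: smooth2_regular_on)

text \<open>By the product rule, each partial derivative of an element of this algebra agrees on U
  with another element; hence all its elements are smooth.\<close>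

inductive smooth_algebra :: "(real \<times> real) set \<Rightarrow> (real \<Rightarrow> real \<Rightarrow> real) \<Rightarrow> bool" for U
where
  base: "smooth2 U f \<Longrightarrow> smooth_algebra U f"
| add: "smooth_algebra U f \<Longrightarrow> smooth_algebra U g \<Longrightarrow> smooth_algebra U (\<lambda>x t. f x t + g x t)"
| mult: "smooth_algebra U f \<Longrightarrow> smooth_algebra U g \<Longrightarrow> smooth_algebra U (\<lambda>x t. f x t * g x t)"
| uminus: "smooth_algebra U f \<Longrightarrow> smooth_algebra U (\<lambda>x t. - f x t)"

lemma smooth_algebra_regular_on: "smooth_algebra U f \<Longrightarrow> regular_on U f"
  by (induction rule: smooth_algebra.induct)
    (auto simp: regular_on_def intro!: continuous_intros derivative_intros dest: smooth2_regular_on)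

lemma smooth_algebra_partial:
  "smooth_algebra U f \<Longrightarrow> \<exists>g. smooth_algebra U g \<and> agree_on U (iter_partial [b] f) g"
proof (induction rule: smooth_algebra.induct)
  case (base f)
  then show ?case
    using smooth2_iter_partial[of U f "[b]"] by (blast intro: smooth_algebra.base agree_on_refl)
next
  case (add f g)
  then obtain f' g' where "smooth_algebra U f'" "agree_on U (iter_partial [b] f) f'"
    "smooth_algebra U g'" "agree_on U (iter_partial [b] g) g'"
    by blast
  moreover have "regular_on U f" "regular_on U g"
    using add.hyps by (auto intro: smooth_algebra_regular_on)
  ultimately show ?case
    by (intro exI[of _ "\<lambda>x t. f' x t + g' x t"])
      (auto intro: smooth_algebra.add simp: agree_on_def regular_on_def pDx_def pDt_def)
next
  case (mult f g)
  then obtain f' g' where "smooth_algebra U f'" "agree_on U (iter_partial [b] f) f'"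
    "smooth_algebra U g'" "agree_on U (iter_partial [b] g) g'"
    by blast
  moreover have "regular_on U f" "regular_on U g"
    using mult.hyps by (auto intro: smooth_algebra_regular_on)
  ultimately show ?case
    using mult.hyps
    by (intro exI[of _ "\<lambda>x t. f x t * g' x t + f' x t * g x t"])
      (auto intro: smooth_algebra.add smooth_algebra.mult simp: agree_on_def regular_on_def pDx_def pDt_def)
next
  case (uminus f)
  then obtain f' where "smooth_algebra U f'" "agree_on U (iter_partial [b] f) f'"
    by blast
  moreover have "regular_on U f"
    using uminus.hyps by (auto intro: smooth_algebra_regular_on)
  ultimately show ?case
    by (intro exI[of _ "\<lambda>x t. - f' x t"])
      (auto intro: smooth_algebra.uminus simp: agree_on_def regular_on_def pDx_def pDt_def)
qed

lemma smooth_algebra_iter_partial: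
  assumes "open U" "smooth_algebra U f"
  shows "\<exists>g. smooth_algebra U g \<and> agree_on U (iter_partial bs f) g"
proof (induction bs)
  case Nil
  then show ?case using assms(2) by (auto intro: agree_on_refl)
next
  case (Cons b bs)
  then obtain g where g: "smooth_algebra U g" "agree_on U (iter_partial bs f) g"
    by blast
  moreover obtain g' where "smooth_algebra U g'" "agree_on U (iter_partial [b] g) g'"
    using smooth_algebra_partial[OF g(1)] by blast
  moreover have "agree_on U (iter_partial (b # bs) f) (iter_partial [b] g)"
    using agree_on_iter_partial[OF assms(1) g(2), of "[b]"] by simp
  ultimately show ?case
    by (blast intro: agree_on_trans)
qed

lemma smooth_algebra_smooth2: "open U \<Longrightarrow> smooth_algebra U f \<Longrightarrow> smooth2 U f"
  unfolding smooth2_iff_regular_on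
  by (metis smooth_algebra_iter_partial smooth_algebra_regular_on regular_on_agree agree_on_def)

lemma
  fixes f g :: "real \<Rightarrow> real \<Rightarrow> real"
  assumes "open U" "smooth2 U f" "smooth2 U g"
  shows smooth2_add: "smooth2 U (\<lambda>x t. f x t + g x t)"
    and smooth2_mult: "smooth2 U (\<lambda>x t. f x t * g x t)"
    and smooth2_diff: "smooth2 U (\<lambda>x t. f x t - g x t)"
proof -
  have "smooth_algebra U f" "smooth_algebra U g"
    using assms(2,3) by (auto intro: smooth_algebra.base)
  then have "smooth_algebra U (\<lambda>x t. f x t + g x t)" "smooth_algebra U (\<lambda>x t. f x t * g x t)"
    "smooth_algebra U (\<lambda>x t. f x t - g x t)"
    using smooth_algebra.add[OF _ smooth_algebra.uminus, of U f g] by (auto intro: smooth_algebra.intros)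
  then show "smooth2 U (\<lambda>x t. f x t + g x t)" "smooth2 U (\<lambda>x t. f x t * g x t)"
    "smooth2 U (\<lambda>x t. f x t - g x t)"
    using smooth_algebra_smooth2[OF assms(1)] by simp_all
qed

lemma smooth2_uminus:
  fixes f :: "real \<Rightarrow> real \<Rightarrow> real"
  assumes "open U" "smooth2 U f"
  shows "smooth2 U (\<lambda>x t. - f x t)"
  using assms by (blast intro: smooth_algebra_smooth2 smooth_algebra.uminus smooth_algebra.base)

lemma iter_partial_vec_nth:
  fixes h :: "real \<Rightarrow> real \<Rightarrow> real^'n"
  assumes "open U" "smooth2 U h"
  shows "agree_on U (iter_partial bs (\<lambda>x t. h x t $ i)) (\<lambda>x t. iter_partial bs h x t $ i)"
proof (induction bs)
  case Nil
  then show ?case by (simp add: agree_on_refl)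
next
  case (Cons b bs)
  have "regular_on U (iter_partial bs h)"
    using assms(2) by (simp add: smooth2_iff_regular_on)
  then have "agree_on U (iter_partial [b] (\<lambda>x t. iter_partial bs h x t $ i))
      (\<lambda>x t. iter_partial (b # bs) h x t $ i)"
    by (auto simp: agree_on_def regular_on_def pDx_def pDt_def
        intro!: vector_derivative_at bounded_linear.has_vector_derivative[OF bounded_linear_vec_nth]
        simp flip: vector_derivative_works)
  then show ?case
    using agree_on_iter_partial[OF assms(1) Cons, of "[b]"] by (auto intro: agree_on_trans)
qed

lemma differentiable_vec_nth:
  fixes h :: "real \<Rightarrow> real^'n"
  assumes "h differentiable (at x)"
  shows "(\<lambda>y. h y $ i) differentiable (at x)"
  using bounded_linear.has_vector_derivative[OF bounded_linear_vec_nth assms[unfolded vector_derivative_works]]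
  by (rule differentiableI_vector)

lemma smooth2_vec_nth:
  fixes h :: "real \<Rightarrow> real \<Rightarrow> real^'n"
  assumes "open U" "smooth2 U h"
  shows "smooth2 U (\<lambda>x t. h x t $ i)"
  unfolding smooth2_iff_regular_on
proof
  fix bs
  have "regular_on U (\<lambda>x t. iter_partial bs h x t $ i)"
    using assms(2) unfolding smooth2_iff_regular_on regular_on_def
    by (auto intro: continuous_on_component differentiable_vec_nth)
  then show "regular_on U (iter_partial bs (\<lambda>x t. h x t $ i))"
    by (rule regular_on_agree[OF assms(1) agree_on_sym[OF iter_partial_vec_nth[OF assms]]])
qed

lemma smooth2_det3:
  fixes u v w :: "real \<Rightarrow> real \<Rightarrow> real^3"
  assumes "open U" "smooth2 U u" "smooth2 U v" "smooth2 U w"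
  shows "smooth2 U (\<lambda>x t. det (vector [u x t, v x t, w x t] :: real^3^3))"
  unfolding det_3 vector_3
  by (intro smooth2_add smooth2_diff smooth2_mult smooth2_vec_nth assms)

section \<open>Coordinates in a unimodular frame\<close>

lemma det3_row_coordinates:
  fixes u v w z :: "real^3"
  assumes "z = a *\<^sub>R u + b *\<^sub>R v + c *\<^sub>R w"
  shows "det (vector [z, v, w] :: real^3^3) = a * det (vector [u, v, w] :: real^3^3)"
    and "det (vector [u, z, w] :: real^3^3) = b * det (vector [u, v, w] :: real^3^3)"
    and "det (vector [u, v, z] :: real^3^3) = c * det (vector [u, v, w] :: real^3^3)"
  using assms by (simp_all add: det_3 algebra_simps)

lemma unimodular_coordinates_unique:
  fixes u v w :: "real^3"
  assumes "det (vector [u, v, w] :: real^3^3) = 1"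
    and "a *\<^sub>R u + b *\<^sub>R v + c *\<^sub>R w = a' *\<^sub>R u + b' *\<^sub>R v + c' *\<^sub>R w"
  shows "a = a'" "b = b'" "c = c'"
proof -
  define z where "z = a *\<^sub>R u + b *\<^sub>R v + c *\<^sub>R w"
  show "a = a'" "b = b'" "c = c'"
    using det3_row_coordinates[OF z_def] det3_row_coordinates[OF z_def[unfolded assms(2)]] assms(1)
    by simp_all
qed

lemma smooth2_unimodular_coordinates:
  fixes u v w z :: "real \<Rightarrow> real \<Rightarrow> real^3"
  assumes "open U" "smooth2 U u" "smooth2 U v" "smooth2 U w" "smooth2 U z"
    and unimodular: "\<And>x t. (x, t) \<in> U \<Longrightarrow> det (vector [u x t, v x t, w x t] :: real^3^3) = 1"
    and coords: "\<And>x t. (x, t) \<in> U \<Longrightarrow> z x t = a x t *\<^sub>R u x t + b x t *\<^sub>R v x t + c x t *\<^sub>R w x t"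
  shows "smooth2 U a" "smooth2 U b" "smooth2 U c"
proof -
  have "agree_on U (\<lambda>x t. det (vector [z x t, v x t, w x t] :: real^3^3)) a"
    "agree_on U (\<lambda>x t. det (vector [u x t, z x t, w x t] :: real^3^3)) b"
    "agree_on U (\<lambda>x t. det (vector [u x t, v x t, z x t] :: real^3^3)) c"
    using det3_row_coordinates[OF coords] unimodular by (simp_all add: agree_on_def)
  then show "smooth2 U a" "smooth2 U b" "smooth2 U c"
    using smooth2_det3[OF assms(1)] assms(2-5) by (auto intro: smooth2_agree[OF assms(1)])
qed

section \<open>Symmetry of mixed partial derivatives\<close>

lemma regular_on_continuous_on_slice_t:
  assumes "regular_on U f" "\<And>\<sigma>. \<sigma> \<in> S \<Longrightarrow> (y, \<sigma>) \<in> U"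
  shows "continuous_on S (f y)"
proof -
  have "continuous_on S (\<lambda>\<sigma>. (\<lambda>z. f (fst z) (snd z)) (y, \<sigma>))"
    using assms(1) unfolding regular_on_def
    by (rule continuous_on_compose2[OF conjunct1 continuous_on_Pair[OF continuous_on_const continuous_on_id]])
      (use assms(2) in auto)
  then show ?thesis by simp
qed

lemma pDx_eq_integral_pDx_pDt:
  fixes f :: "real \<Rightarrow> real \<Rightarrow> 'a::banach"
  assumes sm: "smooth2 U f" and e: "e > 0" and box: "cball x e \<times> {a..b} \<subseteq> U" and s: "s \<in> {a..b}"
  shows "pDx f x s = pDx f x a + integral {a..s} (pDx (pDt f) x)"
proof -
  have inU: "(y, \<sigma>) \<in> U" if "y \<in> cball x e" "\<sigma> \<in> {a..s}" for y \<sigma>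
    using that s box by auto
  have ftc: "f y s = f y a + integral {a..s} (pDt f y)" if y: "y \<in> cball x e" for y
  proof -
    have "(pDt f y has_integral (f y s - f y a)) {a..s}"
      using s inU[OF y] smooth2_has_vector_derivative_t[OF sm]
      by (intro fundamental_theorem_of_calculus) (auto intro: has_vector_derivative_at_within)
    then show ?thesis by (simp add: integral_unique)
  qed
  have "((\<lambda>y. integral (cbox a s) (pDt f y)) has_vector_derivative integral (cbox a s) (pDx (pDt f) x))
      (at x within ball x e)"
  proof (rule leibniz_rule_vector_derivative)
    fix y \<sigma> assume "y \<in> ball x e" "\<sigma> \<in> cbox a s"
    then show "((\<lambda>y. pDt f y \<sigma>) has_vector_derivative pDx (pDt f) y \<sigma>) (at y within ball x e)"
      using inU smooth2_has_vector_derivative_x[OF smooth2_pDt[OF sm]]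
      by (auto intro: has_vector_derivative_at_within)
  next
    fix y assume "y \<in> ball x e"
    then have "continuous_on (cbox a s) (pDt f y)"
      using inU by (intro regular_on_continuous_on_slice_t[OF smooth2_regular_on[OF smooth2_pDt[OF sm]]]) auto
    then show "pDt f y integrable_on cbox a s"
      by (rule integrable_continuous)
  next
    show "continuous_on (ball x e \<times> cbox a s) (\<lambda>(y, \<sigma>). pDx (pDt f) y \<sigma>)"
      using inU smooth2_regular_on[OF smooth2_pDx[OF smooth2_pDt[OF sm]]] unfolding regular_on_def
      by (auto simp: case_prod_beta intro: continuous_on_subset)
  qed (use e in auto)
  then have "((\<lambda>y. f y a + integral {a..s} (pDt f y)) has_vector_derivative
      pDx f x a + integral {a..s} (pDx (pDt f) x)) (at x)"
    using e inU smooth2_has_vector_derivative_x[OF sm, of x a] s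
    by (auto intro!: has_vector_derivative_add simp: at_within_open[of x "ball x e"])
  then have "((\<lambda>y. f y s) has_vector_derivative pDx f x a + integral {a..s} (pDx (pDt f) x)) (at x)"
    by (rule has_vector_derivative_transform_within_open[of _ _ _ "ball x e"]) (use e ftc in auto)
  then show ?thesis
    unfolding pDx_def by (rule vector_derivative_at)
qed

theorem pDt_pDx_commute:
  fixes f :: "real \<Rightarrow> real \<Rightarrow> 'a::banach"
  assumes U: "open U" and sm: "smooth2 U f" and xt: "(x, t) \<in> U"
  shows "pDt (pDx f) x t = pDx (pDt f) x t"
proof -
  obtain A B where AB: "open A" "open B" "(x, t) \<in> A \<times> B" "A \<times> B \<subseteq> U"
    by (rule open_prod_elim[OF U xt])
  have "x \<in> A" "t \<in> B"
    using AB(3) by auto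
  obtain e1 where e1: "e1 > 0" "cball x e1 \<subseteq> A"
    using open_contains_cball AB(1) \<open>x \<in> A\<close> by blast
  obtain e2 where e2: "e2 > 0" "cball t e2 \<subseteq> B"
    using open_contains_cball AB(2) \<open>t \<in> B\<close> by blast
  define e where "e = min e1 e2"
  have e: "e > 0" "cball x e \<subseteq> A" "cball t e \<subseteq> B"
    using e1 e2 unfolding e_def by auto
  have box: "cball x e \<times> {t - e..t + e} \<subseteq> U"
    using e AB(4) cball_eq_atLeastAtMost[of t e] by auto
  have "continuous_on {t - e..t + e} (pDx (pDt f) x)"
    using box e(1)
    by (intro regular_on_continuous_on_slice_t[OF smooth2_regular_on[OF smooth2_pDx[OF smooth2_pDt[OF sm]]]]) auto
  then have "((\<lambda>s. integral {t - e..s} (pDx (pDt f) x)) has_vector_derivative pDx (pDt f) x t)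
      (at t within {t - e..t + e})"
    by (rule integral_has_vector_derivative) (use e in auto)
  moreover have "at t within {t - e..t + e} = at t"
    by (rule at_within_interior) (use e in auto)
  ultimately have "((\<lambda>s. pDx f x (t - e) + integral {t - e..s} (pDx (pDt f) x)) has_vector_derivative
      pDx (pDt f) x t) (at t)"
    using has_vector_derivative_add[OF has_vector_derivative_const] by fastforce
  then have "((\<lambda>s. pDx f x s) has_vector_derivative pDx (pDt f) x t) (at t)"
  proof (rule has_vector_derivative_transform_within_open[of _ _ _ "ball t e"])
    fix s assume "s \<in> ball t e"
    then have "s \<in> {t - e..t + e}"
      by (auto simp: dist_real_def)
    then show "pDx f x (t - e) + integral {t - e..s} (pDx (pDt f) x) = pDx f x s"
      by (rule pDx_eq_integral_pDx_pDt[OF sm e(1) box, symmetric])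
  qed (use e in auto)
  then show ?thesis
    unfolding pDt_def by (rule vector_derivative_at)
qed

section \<open>Differential polynomials\<close>

text \<open>Var i n stands for the n-th x-derivative of the i-th function.\<close>

datatype dexpr = Var nat nat | Const real | Add dexpr dexpr | Mult dexpr dexpr | Neg dexpr

fun deval :: "(nat \<Rightarrow> real \<Rightarrow> real \<Rightarrow> real) \<Rightarrow> dexpr \<Rightarrow> real \<Rightarrow> real \<Rightarrow> real" where
  "deval \<rho> (Var i n) = (pDx ^^ n) (\<rho> i)"
| "deval \<rho> (Const c) = (\<lambda>x t. c)"
| "deval \<rho> (Add a b) = (\<lambda>x t. deval \<rho> a x t + deval \<rho> b x t)"
| "deval \<rho> (Mult a b) = (\<lambda>x t. deval \<rho> a x t * deval \<rho> b x t)"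
| "deval \<rho> (Neg a) = (\<lambda>x t. - deval \<rho> a x t)"

fun ddx :: "dexpr \<Rightarrow> dexpr" where
  "ddx (Var i n) = Var i (Suc n)"
| "ddx (Const c) = Const 0"
| "ddx (Add a b) = Add (ddx a) (ddx b)"
| "ddx (Mult a b) = Add (Mult (ddx a) b) (Mult a (ddx b))"
| "ddx (Neg a) = Neg (ddx a)"

lemma smooth2_deval:
  assumes "open U" "\<And>i. smooth2 U (\<rho> i)"
  shows "smooth2 U (deval \<rho> e)"
  by (induction e)
    (simp_all add: smooth2_funpow_pDx smooth2_const smooth2_add smooth2_mult smooth2_uminus assms)

lemma pDx_deval:
  assumes "open U" "\<And>i. smooth2 U (\<rho> i)" "(x, t) \<in> U"
  shows "pDx (deval \<rho> e) x t = deval \<rho> (ddx e) x t"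
proof -
  have "regular_on U (deval \<rho> e)" for e
    by (rule smooth2_regular_on[OF smooth2_deval[OF assms(1,2)]])
  with assms(3) show ?thesis
    by (induction e) (auto simp: pDx_def regular_on_def)
qed

lemma funpow_pDx_deval:
  assumes "open U" "\<And>i. smooth2 U (\<rho> i)"
  shows "agree_on U ((pDx ^^ n) (deval \<rho> e)) (deval \<rho> ((ddx ^^ n) e))"
proof (induction n)
  case 0
  then show ?case by (simp add: agree_on_refl)
next
  case (Suc n)
  have "agree_on U (pDx (deval \<rho> ((ddx ^^ n) e))) (deval \<rho> (ddx ((ddx ^^ n) e)))"
    using pDx_deval[OF assms] by (simp add: agree_on_def)
  then show ?case
    using agree_on_pDx[OF assms(1) Suc] by (auto intro: agree_on_trans)
qed

section \<open>Non-stretching flows of centroaffine curves\<close>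

text \<open>The x-derivative of a \<gamma> + b \<gamma>' + c \<gamma>'' has frame coordinates frame_dx (a, b, c),
  using \<gamma>''' = p0 \<gamma> + p1 \<gamma>'. Here and below Var 0, Var 1, Var 2, Var 3 stand for p0, p1, r1, r2.\<close>

fun frame_dx :: "dexpr \<times> dexpr \<times> dexpr \<Rightarrow> dexpr \<times> dexpr \<times> dexpr" where
  "frame_dx (a, b, c) = (Add (ddx a) (Mult (Var 0 0) c), Add (Add (ddx b) a) (Mult (Var 1 0) c), Add (ddx c) b)"

text \<open>dt_frame 0 lists the coefficients r0, r1, r2 of the evolution equation.\<close>

fun dt_frame :: "nat \<Rightarrow> dexpr \<times> dexpr \<times> dexpr" where
  "dt_frame 0 =
     (Add (Neg (Var 2 1)) (Mult (Const (-1/3)) (Add (Var 3 2) (Mult (Const 2) (Mult (Var 1 0) (Var 3 0))))),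
      Var 2 0, Var 3 0)"
| "dt_frame (Suc n) = frame_dx (dt_frame n)"

text \<open>Differentiating \<gamma>''' = p0 \<gamma> + p1 \<gamma>' in t and comparing \<gamma>- and \<gamma>'-coordinates.\<close>

definition p0_dt :: dexpr where
  "p0_dt = Add (fst (dt_frame 3))
     (Neg (Add (Mult (Var 0 0) (fst (dt_frame 0))) (Mult (Var 1 0) (fst (dt_frame 1)))))"

definition p1_dt :: dexpr where
  "p1_dt = Add (fst (snd (dt_frame 3)))
     (Neg (Add (Mult (Var 0 0) (fst (snd (dt_frame 0)))) (Mult (Var 1 0) (fst (snd (dt_frame 1))))))"

locale nonstretching_flow =
  fixes U :: "(real \<times> real) set"
    and \<gamma> :: "real \<Rightarrow> real \<Rightarrow> real^3"
    and p0 p1 r1 r2 :: "real \<Rightarrow> real \<Rightarrow> real"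
  assumes U_open: "open U"
    and smooth: "smooth2 U \<gamma>"
    and arclength: "\<And>x t. (x, t) \<in> U \<Longrightarrow>
          det (vector [\<gamma> x t, pDx \<gamma> x t, pDx (pDx \<gamma>) x t] :: real^3^3) = 1"
    and wilczynski: "\<And>x t. (x, t) \<in> U \<Longrightarrow>
          pDx (pDx (pDx \<gamma>)) x t = p0 x t *\<^sub>R \<gamma> x t + p1 x t *\<^sub>R pDx \<gamma> x t"
    and evolution: "\<And>x t. (x, t) \<in> U \<Longrightarrow>
          pDt \<gamma> x t =
            (- pDx r1 x t - (1/3) * (pDx (pDx r2) x t + 2 * p1 x t * r2 x t)) *\<^sub>R \<gamma> x t
            + r1 x t *\<^sub>R pDx \<gamma> x t + r2 x t *\<^sub>R pDx (pDx \<gamma>) x t"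
begin

definition \<rho> :: "nat \<Rightarrow> real \<Rightarrow> real \<Rightarrow> real" where
  "\<rho> i = (if i = 0 then p0 else if i = 1 then p1 else if i = 2 then r1 else r2)"

fun frame_comb :: "dexpr \<times> dexpr \<times> dexpr \<Rightarrow> real \<Rightarrow> real \<Rightarrow> real^3" where
  "frame_comb (a, b, c) =
     (\<lambda>x t. deval \<rho> a x t *\<^sub>R \<gamma> x t + deval \<rho> b x t *\<^sub>R pDx \<gamma> x t + deval \<rho> c x t *\<^sub>R pDx (pDx \<gamma>) x t)"

lemma smooth2_gamma_derivatives:
  "smooth2 U (pDx \<gamma>)" "smooth2 U (pDx (pDx \<gamma>))" "smooth2 U (pDx (pDx (pDx \<gamma>)))" "smooth2 U (pDt \<gamma>)"
  using smooth smooth2_pDx smooth2_pDt by blast+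

lemma smooth2_coefficients: "smooth2 U p0" "smooth2 U p1" "smooth2 U r1" "smooth2 U r2"
proof -
  have "pDx (pDx (pDx \<gamma>)) x t = p0 x t *\<^sub>R \<gamma> x t + p1 x t *\<^sub>R pDx \<gamma> x t + 0 *\<^sub>R pDx (pDx \<gamma>) x t"
    if "(x, t) \<in> U" for x t
    using wilczynski[OF that] by simp
  from smooth2_unimodular_coordinates[OF U_open smooth smooth2_gamma_derivatives(1,2,3) arclength this]
  show "smooth2 U p0" "smooth2 U p1"
    by blast+
  show "smooth2 U r1" "smooth2 U r2"
    using smooth2_unimodular_coordinates[OF U_open smooth smooth2_gamma_derivatives(1,2,4) arclength evolution]
    by blast+
qed

lemma smooth2_\<rho>: "smooth2 U (\<rho> i)"
  unfolding \<rho>_def using smooth2_coefficients by simp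

lemma pDx_frame_comb:
  assumes xt: "(x, t) \<in> U"
  shows "pDx (frame_comb abc) x t = frame_comb (frame_dx abc) x t"
proof -
  obtain a b c where abc: "abc = (a, b, c)"
    by (metis prod.exhaust)
  have "((\<lambda>y. deval \<rho> e y t) has_real_derivative deval \<rho> (ddx e) x t) (at x)" for e
    using smooth2_has_vector_derivative_x[OF smooth2_deval[OF U_open smooth2_\<rho>] xt]
    by (simp add: has_real_derivative_iff_has_vector_derivative pDx_deval[OF U_open smooth2_\<rho> xt])
  moreover have "((\<lambda>y. g y t) has_vector_derivative pDx g x t) (at x)"
    if "g \<in> {\<gamma>, pDx \<gamma>, pDx (pDx \<gamma>)}" for g
    using that smooth smooth2_gamma_derivatives by (auto intro: smooth2_has_vector_derivative_x[OF _ xt])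
  ultimately have "((\<lambda>y. frame_comb abc y t) has_vector_derivative
      deval \<rho> a x t *\<^sub>R pDx \<gamma> x t + deval \<rho> (ddx a) x t *\<^sub>R \<gamma> x t
      + (deval \<rho> b x t *\<^sub>R pDx (pDx \<gamma>) x t + deval \<rho> (ddx b) x t *\<^sub>R pDx \<gamma> x t)
      + (deval \<rho> c x t *\<^sub>R pDx (pDx (pDx \<gamma>)) x t + deval \<rho> (ddx c) x t *\<^sub>R pDx (pDx \<gamma>) x t)) (at x)"
    (is "(_ has_vector_derivative ?D) _")
    unfolding abc frame_comb.simps
    by (intro has_vector_derivative_add has_vector_derivative_scaleR) auto
  then have "pDx (frame_comb abc) x t = ?D"
    unfolding pDx_def by (rule vector_derivative_at)
  also have "?D = frame_comb (frame_dx abc) x t"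
    unfolding abc by (simp add: wilczynski[OF xt] \<rho>_def algebra_simps)
  finally show ?thesis .
qed

lemma pDt_gamma_derivatives: "agree_on U (pDt ((pDx ^^ n) \<gamma>)) (frame_comb (dt_frame n))"
proof (induction n)
  case 0
  show ?case
    using evolution by (simp add: agree_on_def \<rho>_def numeral_2_eq_2)
next
  case (Suc n)
  have "pDt (pDx ((pDx ^^ n) \<gamma>)) x t = frame_comb (dt_frame (Suc n)) x t" if xt: "(x, t) \<in> U" for x t
  proof -
    have "pDt (pDx ((pDx ^^ n) \<gamma>)) x t = pDx (pDt ((pDx ^^ n) \<gamma>)) x t"
      by (rule pDt_pDx_commute[OF U_open smooth2_funpow_pDx[OF smooth] xt])
    also have "\<dots> = pDx (frame_comb (dt_frame n)) x t"
      by (rule pDx_agree[OF U_open Suc xt])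
    also have "\<dots> = frame_comb (dt_frame (Suc n)) x t"
      by (simp add: pDx_frame_comb[OF xt])
    finally show ?thesis .
  qed
  then show ?case
    by (simp add: agree_on_def)
qed

lemma pDt_wilczynski:
  assumes xt: "(x, t) \<in> U"
  shows "pDt ((pDx ^^ 3) \<gamma>) x t = p0 x t *\<^sub>R pDt \<gamma> x t + pDt p0 x t *\<^sub>R \<gamma> x t
    + (p1 x t *\<^sub>R pDt (pDx \<gamma>) x t + pDt p1 x t *\<^sub>R pDx \<gamma> x t)"
    (is "_ = ?D")
proof -
  have "((\<lambda>s. p0 x s) has_real_derivative pDt p0 x t) (at t)" "((\<lambda>s. p1 x s) has_real_derivative pDt p1 x t) (at t)"
    using smooth2_has_vector_derivative_t[OF smooth2_coefficients(1) xt]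
      smooth2_has_vector_derivative_t[OF smooth2_coefficients(2) xt]
    by (simp_all add: has_real_derivative_iff_has_vector_derivative)
  then have "((\<lambda>s. p0 x s *\<^sub>R \<gamma> x s + p1 x s *\<^sub>R pDx \<gamma> x s) has_vector_derivative ?D) (at t)"
    using smooth2_has_vector_derivative_t[OF smooth xt]
      smooth2_has_vector_derivative_t[OF smooth2_gamma_derivatives(1) xt]
    by (intro has_vector_derivative_add has_vector_derivative_scaleR)
  then have "pDt (\<lambda>x t. p0 x t *\<^sub>R \<gamma> x t + p1 x t *\<^sub>R pDx \<gamma> x t) x t = ?D"
    unfolding pDt_def by (rule vector_derivative_at)
  moreover have "agree_on U ((pDx ^^ 3) \<gamma>) (\<lambda>x t. p0 x t *\<^sub>R \<gamma> x t + p1 x t *\<^sub>R pDx \<gamma> x t)"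
    using wilczynski by (simp add: agree_on_def eval_nat_numeral)
  ultimately show ?thesis
    by (simp add: pDt_agree[OF U_open _ xt])
qed

lemma pDt_p0_p1:
  assumes xt: "(x, t) \<in> U"
  shows "pDt p0 x t = deval \<rho> p0_dt x t" "pDt p1 x t = deval \<rho> p1_dt x t"
proof -
  define A B C where "A n = deval \<rho> (fst (dt_frame n)) x t" and "B n = deval \<rho> (fst (snd (dt_frame n))) x t"
    and "C n = deval \<rho> (snd (snd (dt_frame n))) x t" for n
  have frame: "pDt ((pDx ^^ n) \<gamma>) x t = A n *\<^sub>R \<gamma> x t + B n *\<^sub>R pDx \<gamma> x t + C n *\<^sub>R pDx (pDx \<gamma>) x t" for n
    using pDt_gamma_derivatives[of n] xt unfolding A_def B_def C_def agree_on_def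
    by (cases "dt_frame n") auto
  have "A 3 *\<^sub>R \<gamma> x t + B 3 *\<^sub>R pDx \<gamma> x t + C 3 *\<^sub>R pDx (pDx \<gamma>) x t
      = (pDt p0 x t + p0 x t * A 0 + p1 x t * A 1) *\<^sub>R \<gamma> x t
        + (pDt p1 x t + p0 x t * B 0 + p1 x t * B 1) *\<^sub>R pDx \<gamma> x t
        + (p0 x t * C 0 + p1 x t * C 1) *\<^sub>R pDx (pDx \<gamma>) x t"
    using pDt_wilczynski[OF xt] unfolding frame[of 0, simplified] frame[of 1, simplified] frame[of 3]
    by (simp add: algebra_simps)
  from unimodular_coordinates_unique(1,2)[OF arclength[OF xt] this]
  show "pDt p0 x t = deval \<rho> p0_dt x t" "pDt p1 x t = deval \<rho> p1_dt x t"
    unfolding p0_dt_def p1_dt_def deval.simps A_def[symmetric] B_def[symmetric]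
    by (simp_all add: \<rho>_def)
qed

lemma funpow_pDx_deval_at:
  "(x, t) \<in> U \<Longrightarrow> (pDx ^^ n) (deval \<rho> e) x t = deval \<rho> ((ddx ^^ n) e) x t"
  using funpow_pDx_deval[OF U_open smooth2_\<rho>] by (simp add: agree_on_def)

lemma k1_evolution:
  fixes k1 k2 :: "real \<Rightarrow> real \<Rightarrow> real"
  assumes k1_def: "k1 = p1" and k2_def: "k2 = (\<lambda>x t. p0 x t - pDx p1 x t)" and xt: "(x, t) \<in> U"
  shows "pDt k1 x t =
           - 2 * (pDx ^^ 3) r1 x t
           + pDx (\<lambda>y s. k1 y s * r1 y s) x t + k1 x t * pDx r1 x t
           - (pDx ^^ 4) r2 x t
           + (pDx ^^ 2) (\<lambda>y s. k1 y s * r2 y s) x t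
           + 2 * pDx (\<lambda>y s. k2 y s * r2 y s) x t + k2 x t * pDx r2 x t"
proof -
  have products: "(\<lambda>y s. k1 y s * r1 y s) = deval \<rho> (Mult (Var 1 0) (Var 2 0))"
    "(\<lambda>y s. k1 y s * r2 y s) = deval \<rho> (Mult (Var 1 0) (Var 3 0))"
    "(\<lambda>y s. k2 y s * r2 y s) = deval \<rho> (Mult (Add (Var 0 0) (Neg (Var 1 1))) (Var 3 0))"
    unfolding k1_def k2_def by (simp_all add: \<rho>_def)
  have "pDt k1 x t = deval \<rho> p1_dt x t"
    unfolding k1_def by (rule pDt_p0_p1(2)[OF xt])
  then show ?thesis
    unfolding products funpow_pDx_deval_at[OF xt] funpow_pDx_deval_at[OF xt, of 1, simplified]
    unfolding k1_def k2_def
    by (simp add: p1_dt_def \<rho>_def eval_nat_numeral field_simps)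
qed

lemma k2_evolution:
  fixes k1 k2 :: "real \<Rightarrow> real \<Rightarrow> real"
  assumes k1_def: "k1 = p1" and k2_def: "k2 = (\<lambda>x t. p0 x t - pDx p1 x t)" and xt: "(x, t) \<in> U"
  shows "pDt k2 x t =
           (pDx ^^ 4) r1 x t - k1 x t * (pDx ^^ 2) r1 x t
           + 2 * k2 x t * pDx r1 x t + pDx (\<lambda>y s. k2 y s * r1 y s) x t
           + (2/3) * ((pDx ^^ 5) r2 x t
                      + k1 x t * pDx (\<lambda>y s. k1 y s * r2 y s) x t
                      - k1 x t * (pDx ^^ 3) r2 x t
                      - (pDx ^^ 3) (\<lambda>y s. k1 y s * r2 y s) x t)
           + (k2 x t * (pDx ^^ 2) r2 x t - (pDx ^^ 2) (\<lambda>y s. k2 y s * r2 y s) x t)"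
proof -
  have products: "(\<lambda>y s. k1 y s * r2 y s) = deval \<rho> (Mult (Var 1 0) (Var 3 0))"
    "(\<lambda>y s. k2 y s * r1 y s) = deval \<rho> (Mult (Add (Var 0 0) (Neg (Var 1 1))) (Var 2 0))"
    "(\<lambda>y s. k2 y s * r2 y s) = deval \<rho> (Mult (Add (Var 0 0) (Neg (Var 1 1))) (Var 3 0))"
    unfolding k1_def k2_def by (simp_all add: \<rho>_def)
  have "((\<lambda>s. p0 x s - pDx p1 x s) has_vector_derivative pDt p0 x t - pDt (pDx p1) x t) (at t)"
    using smooth2_coefficients(1) smooth2_pDx[OF smooth2_coefficients(2)]
    by (intro has_vector_derivative_diff smooth2_has_vector_derivative_t[OF _ xt])
  then have "pDt k2 x t = pDt p0 x t - pDt (pDx p1) x t"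
    unfolding k2_def pDt_def[of "\<lambda>x t. p0 x t - pDx p1 x t"] by (rule vector_derivative_at)
  also have "pDt (pDx p1) x t = pDx (pDt p1) x t"
    by (rule pDt_pDx_commute[OF U_open smooth2_coefficients(2) xt])
  also have "\<dots> = pDx (deval \<rho> p1_dt) x t"
    using pDt_p0_p1(2) by (intro pDx_agree[OF U_open _ xt]) (simp add: agree_on_def)
  also have "\<dots> = deval \<rho> (ddx p1_dt) x t"
    by (rule pDx_deval[OF U_open smooth2_\<rho> xt])
  finally have "pDt k2 x t = deval \<rho> p0_dt x t - deval \<rho> (ddx p1_dt) x t"
    using pDt_p0_p1(1)[OF xt] by simp
  then show ?thesis
    unfolding products funpow_pDx_deval_at[OF xt] funpow_pDx_deval_at[OF xt, of 1, simplified]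
    unfolding k1_def k2_def
    by (simp add: p0_dt_def p1_dt_def \<rho>_def eval_nat_numeral field_simps)
qed

end

theorem mainTheorem1:
  fixes U :: "(real \<times> real) set"
    and \<gamma> :: "real \<Rightarrow> real \<Rightarrow> real^3"
    and p0 p1 r1 r2 k1 k2 :: "real \<Rightarrow> real \<Rightarrow> real"
  assumes U_open: "open U"
    and smooth: "smooth2 U \<gamma>"
    and arclength: "\<And>x t. (x, t) \<in> U \<Longrightarrow>
          det (vector [\<gamma> x t, pDx \<gamma> x t, pDx (pDx \<gamma>) x t] :: real^3^3) = 1"
    and wilczynski: "\<And>x t. (x, t) \<in> U \<Longrightarrow>
          pDx (pDx (pDx \<gamma>)) x t = p0 x t *\<^sub>R \<gamma> x t + p1 x t *\<^sub>R pDx \<gamma> x t"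
    and evolution: "\<And>x t. (x, t) \<in> U \<Longrightarrow>
          pDt \<gamma> x t =
            (- pDx r1 x t - (1/3) * (pDx (pDx r2) x t + 2 * p1 x t * r2 x t)) *\<^sub>R \<gamma> x t
            + r1 x t *\<^sub>R pDx \<gamma> x t + r2 x t *\<^sub>R pDx (pDx \<gamma>) x t"
    and k1_def: "k1 = p1"
    and k2_def: "k2 = (\<lambda>x t. p0 x t - pDx p1 x t)"
    and xt: "(x, t) \<in> U"
  shows "(pDt k1 x t =
           - 2 * (pDx ^^ 3) r1 x t
           + pDx (\<lambda>y s. k1 y s * r1 y s) x t + k1 x t * pDx r1 x t
           - (pDx ^^ 4) r2 x t
           + (pDx ^^ 2) (\<lambda>y s. k1 y s * r2 y s) x t
           + 2 * pDx (\<lambda>y s. k2 y s * r2 y s) x t + k2 x t * pDx r2 x t)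
       \<and> (pDt k2 x t =
           (pDx ^^ 4) r1 x t - k1 x t * (pDx ^^ 2) r1 x t
           + 2 * k2 x t * pDx r1 x t + pDx (\<lambda>y s. k2 y s * r1 y s) x t
           + (2/3) * ((pDx ^^ 5) r2 x t
                      + k1 x t * pDx (\<lambda>y s. k1 y s * r2 y s) x t
                      - k1 x t * (pDx ^^ 3) r2 x t
                      - (pDx ^^ 3) (\<lambda>y s. k1 y s * r2 y s) x t)
           + (k2 x t * (pDx ^^ 2) r2 x t - (pDx ^^ 2) (\<lambda>y s. k2 y s * r2 y s) x t))"
proof -
  interpret nonstretching_flow U \<gamma> p0 p1 r1 r2
    by unfold_locales (fact U_open smooth arclength wilczynski evolution)+
  show ?thesis
    using k1_evolution[OF k1_def k2_def xt] k2_evolution[OF k1_def k2_def xt] by blast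
qed

end
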